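(* For all positive semidefinite $n\times n$ matrices $A$ and $B$ and every $i=1,\dots,n$, $$\lambda_i\big(\min(A,1)\min(B,1)\big)\le \min(\lambda_i(AB),1).$$
   Context: For a positive semidefinite matrix $A$, $\min(A,1)$ denotes the matrix obtained by functional calculus from the function $x\mapsto\min(x,1)$, i.e. every eigenvalue of $A$ larger than $1$ is replaced by $1$ in a spectral decomposition. For a matrix $X$ with real nonnegative spectrum, $\lambda_1(X)\ge\dots\ge\lambda_n(X)$ denote its eigenvalues sorted non-increasingly. *)

theory Defs
  imports "Jordan_Normal_Form.Schur_Decomposition" "HOL-Library.Multiset"
begin

definition hermitian_mat :: "complex mat \<Rightarrow> bool" where
  "hermitian_mat A \<longleftrightarrow> dim_row A = dim_col A \<and> mat_adjoint A = A"

definition psd_mat :: "nat \<Rightarrow> complex mat \<Rightarrow> bool" where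
  "psd_mat n A \<longleftrightarrow> A \<in> carrier_mat n n \<and> hermitian_mat A \<and>
     (\<forall>v \<in> carrier_vec n. (conjugate v \<bullet> (A *\<^sub>v v)) \<in> \<real> \<and>
                           Re (conjugate v \<bullet> (A *\<^sub>v v)) \<ge> 0)"

definition unitary_mat :: "nat \<Rightarrow> complex mat \<Rightarrow> bool" where
  "unitary_mat n U \<longleftrightarrow> U \<in> carrier_mat n n \<and> U * mat_adjoint U = 1\<^sub>m n
                         \<and> mat_adjoint U * U = 1\<^sub>m n"

definition diag_min1 :: "complex mat \<Rightarrow> complex mat" where
  "diag_min1 D = mat (dim_row D) (dim_col D)
      (\<lambda>(i,j). if i = j then complex_of_real (min (Re (D $$ (i,i))) 1) else 0)"

(* functional calculus min(A,1) via a spectral decomposition A = U D U^* *)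
definition mat_min1 :: "complex mat \<Rightarrow> complex mat" where
  "mat_min1 A = (SOME M. \<exists>U D. unitary_mat (dim_row A) U \<and>
      D \<in> carrier_mat (dim_row A) (dim_row A) \<and> diagonal_mat D \<and>
      (\<forall>i < dim_row A. D $$ (i,i) \<in> \<real>) \<and>
      A = U * D * mat_adjoint U \<and> M = U * diag_min1 D * mat_adjoint U)"

(* eigenvalues (with algebraic multiplicity), real parts, sorted non-increasingly *)
definition eig_list :: "complex mat \<Rightarrow> real list" where
  "eig_list X = rev (sorted_list_of_multiset (image_mset Re (proots (char_poly X))))"

(* lambda_i(X) for i = 1..n *)
definition eig :: "complex mat \<Rightarrow> nat \<Rightarrow> real" where
  "eig X i = eig_list X ! (i - 1)"

end

theory Submission
  imports Defs
begin

text \<open>If \<open>B = S\<^sup>2\<close> with \<open>S\<close> hermitian, then \<open>X B\<close> and \<open>S X S\<close> have the same characteristic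
  polynomial, since \<open>char_poly (P Q) = char_poly (Q P)\<close>. By Weyl's monotonicity theorem
  (Courant--Fischer) the ordered eigenvalues of \<open>S X S\<close> are monotone in \<open>X\<close> for the Loewner
  order, hence so are those of \<open>X B\<close> for positive semidefinite \<open>B\<close>. Writing \<open>A' = min(A,1)\<close>, we
  have \<open>A' \<le> A\<close> and \<open>A' \<le> 1\<close>, so
  \<open>\<lambda>\<^sub>i(A' B') \<le> \<lambda>\<^sub>i(A B') = \<lambda>\<^sub>i(B' A) \<le> \<lambda>\<^sub>i(B A) = \<lambda>\<^sub>i(A B)\<close> and
  \<open>\<lambda>\<^sub>i(A' B') \<le> \<lambda>\<^sub>i(B') \<le> \<lambda>\<^sub>i(1) = 1\<close>.\<close>

section \<open>Adjoints, quadratic forms and unitary matrices\<close>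

lemma mat_adjoint_alt:
  "mat_adjoint (A::complex mat) = mat (dim_col A) (dim_row A) (\<lambda>(i,j). cnj (A $$ (j,i)))"
  unfolding mat_adjoint_def mat_of_rows_def by (rule eq_matI) (simp_all add: cols_nth)

lemma mat_adjoint_dim [simp]:
  "dim_row (mat_adjoint (A::complex mat)) = dim_col A"
  "dim_col (mat_adjoint (A::complex mat)) = dim_row A"
  by (simp_all add: mat_adjoint_alt)

lemma index_mat_adjoint [simp]:
  "i < dim_col A \<Longrightarrow> j < dim_row A \<Longrightarrow> mat_adjoint (A::complex mat) $$ (i,j) = cnj (A $$ (j,i))"
  by (simp add: mat_adjoint_alt)

lemma mat_adjoint_carrier [simp]: "(A::complex mat) \<in> carrier_mat n m \<Longrightarrow> mat_adjoint A \<in> carrier_mat m n"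
  unfolding carrier_mat_def by simp

lemma mat_adjoint_adjoint [simp]: "mat_adjoint (mat_adjoint A) = (A :: complex mat)"
  by (rule eq_matI) simp_all

lemma mat_adjoint_one [simp]: "mat_adjoint (1\<^sub>m n) = (1\<^sub>m n :: complex mat)"
  by (rule eq_matI) simp_all

lemma mat_adjoint_mult:
  fixes A :: "complex mat"
  assumes "A \<in> carrier_mat n k" "B \<in> carrier_mat k m"
  shows "mat_adjoint (A * B) = mat_adjoint B * mat_adjoint A"
proof (rule eq_matI)
  fix i j assume "i < dim_row (mat_adjoint B * mat_adjoint A)" "j < dim_col (mat_adjoint B * mat_adjoint A)"
  with assms show "mat_adjoint (A * B) $$ (i, j) = (mat_adjoint B * mat_adjoint A) $$ (i, j)"
    by (simp add: scalar_prod_def cnj_sum mult.commute)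
qed (use assms in simp_all)

lemma conjugate_sprod_mult_mat_vec:
  fixes A :: "complex mat"
  assumes "A \<in> carrier_mat n m" "u \<in> carrier_vec n" "w \<in> carrier_vec m"
  shows "conjugate u \<bullet> (A *\<^sub>v w) = conjugate (mat_adjoint A *\<^sub>v u) \<bullet> w"
proof -
  have "conjugate u \<bullet> (A *\<^sub>v w) = (\<Sum>i<n. \<Sum>j<m. cnj (u $ i) * A $$ (i,j) * w $ j)"
    using assms by (simp add: scalar_prod_def mult_mat_vec_def lessThan_atLeast0 sum_distrib_left mult.assoc)
  also have "\<dots> = (\<Sum>j<m. \<Sum>i<n. cnj (u $ i) * A $$ (i,j) * w $ j)"
    by (rule sum.swap)
  also have "\<dots> = conjugate (mat_adjoint A *\<^sub>v u) \<bullet> w"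
    using assms by (simp add: scalar_prod_def mult_mat_vec_def lessThan_atLeast0 sum_distrib_left
        sum_distrib_right mult_ac)
  finally show ?thesis .
qed

lemma hermitian_congruence:
  fixes M :: "complex mat"
  assumes M: "M \<in> carrier_mat m n" and X: "X \<in> carrier_mat m m" and hX: "mat_adjoint X = X"
  shows "mat_adjoint (mat_adjoint M * X * M) = mat_adjoint M * X * M"
proof -
  have aM: "mat_adjoint M \<in> carrier_mat n m" using M by simp
  have "mat_adjoint (mat_adjoint M * X * M) = mat_adjoint M * mat_adjoint (mat_adjoint M * X)"
    using aM X M by (intro mat_adjoint_mult[of _ n m]) auto
  also have "mat_adjoint (mat_adjoint M * X) = X * M"
    using mat_adjoint_mult[OF aM X] hX by simp
  finally show ?thesis using aM X M assoc_mult_mat[OF aM X M] by simp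
qed

definition quad_form :: "complex mat \<Rightarrow> complex vec \<Rightarrow> complex" where
  "quad_form H v = conjugate v \<bullet> (H *\<^sub>v v)"

lemma quad_form_congruence:
  assumes M: "M \<in> carrier_mat m n" and X: "X \<in> carrier_mat m m" and v: "v \<in> carrier_vec n"
  shows "quad_form (mat_adjoint M * X * M) v = quad_form X (M *\<^sub>v v)"
proof -
  have aM: "mat_adjoint M \<in> carrier_mat n m" using M by simp
  have "(mat_adjoint M * X * M) *\<^sub>v v = (mat_adjoint M * X) *\<^sub>v (M *\<^sub>v v)"
    using assms aM by (intro assoc_mult_mat_vec[of _ n m]) auto
  also have "\<dots> = mat_adjoint M *\<^sub>v (X *\<^sub>v (M *\<^sub>v v))"
    using assms aM by (intro assoc_mult_mat_vec[of _ n m _ m]) auto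
  finally have "(mat_adjoint M * X * M) *\<^sub>v v = mat_adjoint M *\<^sub>v (X *\<^sub>v (M *\<^sub>v v))" .
  then show ?thesis
    unfolding quad_form_def using M X v by (simp add: conjugate_sprod_mult_mat_vec[of "mat_adjoint M" n m])
qed

lemma unitary_matD:
  assumes "unitary_mat n U"
  shows "U \<in> carrier_mat n n" "mat_adjoint U \<in> carrier_mat n n"
    "U * mat_adjoint U = 1\<^sub>m n" "mat_adjoint U * U = 1\<^sub>m n"
  using assms unfolding unitary_mat_def by auto

lemma unitary_mat_one: "unitary_mat n (1\<^sub>m n)"
  unfolding unitary_mat_def by simp

lemma unitary_mat_cancel:
  assumes U: "unitary_mat n U" and X: "X \<in> carrier_mat n k"
  shows "U * (mat_adjoint U * X) = X" "mat_adjoint U * (U * X) = X"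
  using unitary_matD[OF U] X by (simp_all add: assoc_mult_mat[symmetric, of _ n n _ n _ k])

lemma unitary_mat_vec_cancel:
  assumes U: "unitary_mat n U" and a: "a \<in> carrier_vec n"
  shows "mat_adjoint U *\<^sub>v (U *\<^sub>v a) = a"
  using unitary_matD[OF U] a by (simp add: assoc_mult_mat_vec[symmetric, of _ n n _ n])

lemma unitary_mat_mult:
  assumes U: "unitary_mat n U" and V: "unitary_mat n V"
  shows "unitary_mat n (U * V)"
proof -
  note u = unitary_matD[OF U] and v = unitary_matD[OF V]
  have a: "mat_adjoint (U * V) = mat_adjoint V * mat_adjoint U" using mat_adjoint_mult u v by blast
  have "U * V * mat_adjoint (U * V) = 1\<^sub>m n"
    unfolding a using u v unitary_mat_cancel[OF V, of "mat_adjoint U" n] unitary_mat_cancel[OF U, of "1\<^sub>m n" n]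
      assoc_mult_mat[OF u(1) v(1) mult_carrier_mat[OF v(2) u(2)]] by simp
  moreover have "mat_adjoint (U * V) * (U * V) = 1\<^sub>m n"
    unfolding a using u v unitary_mat_cancel[OF U, of V n]
      assoc_mult_mat[OF v(2) u(2) mult_carrier_mat[OF u(1) v(1)]] by simp
  ultimately show ?thesis unfolding unitary_mat_def using u v by simp
qed

lemma unitary_conjugation_inverse:
  assumes U: "unitary_mat n U" and A: "A \<in> carrier_mat n n"
  shows "U * (mat_adjoint U * A * U) * mat_adjoint U = A"
proof -
  note u = unitary_matD[OF U]
  have "U * (mat_adjoint U * A * U) = U * (mat_adjoint U * (A * U))"
    using assoc_mult_mat[OF u(2) A u(1)] by simp
  also have "\<dots> = A * U" by (rule unitary_mat_cancel(1)[OF U mult_carrier_mat[OF A u(1)]])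
  finally have "U * (mat_adjoint U * A * U) * mat_adjoint U = A * U * mat_adjoint U" by simp
  also have "\<dots> = A * (U * mat_adjoint U)" by (rule assoc_mult_mat[OF A u(1) u(2)])
  also have "\<dots> = A" using u A by simp
  finally show ?thesis .
qed

lemma conjugation_mult:
  fixes U E D :: "complex mat"
  assumes U: "U \<in> carrier_mat n n" and E: "E \<in> carrier_mat n n" and D: "D \<in> carrier_mat n n"
  shows "U * (E * D * mat_adjoint E) * mat_adjoint U = (U * E) * D * mat_adjoint (U * E)"
proof -
  have aE: "mat_adjoint E \<in> carrier_mat n n" and aU: "mat_adjoint U \<in> carrier_mat n n"
    using U E by simp_all
  have "U * (E * D * mat_adjoint E) * mat_adjoint U = U * (E * (D * (mat_adjoint E * mat_adjoint U)))"
    using assoc_mult_mat[OF U mult_carrier_mat[OF mult_carrier_mat[OF E D] aE] aU]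
      assoc_mult_mat[OF E D aE] assoc_mult_mat[OF E mult_carrier_mat[OF D aE] aU]
      assoc_mult_mat[OF D aE aU] by simp
  also have "\<dots> = (U * E) * D * mat_adjoint (U * E)"
    unfolding mat_adjoint_mult[OF U E]
    using assoc_mult_mat[OF U E D] assoc_mult_mat[OF mult_carrier_mat[OF U E] D mult_carrier_mat[OF aE aU]]
      assoc_mult_mat[OF U E mult_carrier_mat[OF D mult_carrier_mat[OF aE aU]]] by simp
  finally show ?thesis .
qed

section \<open>Unitary diagonalisation\<close>

definition real_diag :: "nat \<Rightarrow> (nat \<Rightarrow> real) \<Rightarrow> complex mat" where
  "real_diag n d = mat n n (\<lambda>(i,j). if i = j then complex_of_real (d i) else 0)"

lemma real_diag_dim [simp]: "dim_row (real_diag n d) = n" "dim_col (real_diag n d) = n"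
  by (simp_all add: real_diag_def)

lemma real_diag_carrier [simp]: "real_diag n d \<in> carrier_mat n n"
  by (simp add: real_diag_def)

lemma mat_adjoint_real_diag [simp]: "mat_adjoint (real_diag n d) = real_diag n d"
  by (rule eq_matI) (auto simp: real_diag_def)

lemma real_diag_one: "real_diag n (\<lambda>_. 1) = 1\<^sub>m n"
  by (rule eq_matI) (auto simp: real_diag_def)

lemma real_diag_cong: "(\<And>j. j < n \<Longrightarrow> f j = g j) \<Longrightarrow> real_diag n f = real_diag n g"
  by (rule eq_matI) (auto simp: real_diag_def)

lemma real_diag_Suc:
  "real_diag (Suc m) d = four_block_mat (real_diag 1 d) (0\<^sub>m 1 m) (0\<^sub>m m 1) (real_diag m (\<lambda>i. d (Suc i)))"
  by (rule eq_matI) (auto simp: real_diag_def)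

lemma index_mult_real_diag:
  assumes M: "M \<in> carrier_mat n n" and i: "i < n" and j: "j < n"
  shows "(M * real_diag n e) $$ (i,j) = M $$ (i,j) * of_real (e j)"
proof -
  have "(M * real_diag n e) $$ (i,j) = (\<Sum>l = 0..<n. M $$ (i,l) * (if l = j then of_real (e l) else 0))"
    using M i j by (simp add: scalar_prod_def real_diag_def)
  also have "\<dots> = M $$ (i,j) * of_real (e j)"
    by (simp add: if_distrib[of "\<lambda>x. _ * x"] j cong: if_cong)
  finally show ?thesis .
qed

lemma real_diag_mult: "real_diag n f * real_diag n g = real_diag n (\<lambda>j. f j * g j)"
proof (rule eq_matI)
  fix i j assume "i < dim_row (real_diag n (\<lambda>j. f j * g j))" "j < dim_col (real_diag n (\<lambda>j. f j * g j))"
  then have i: "i < n" and j: "j < n" by auto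
  show "(real_diag n f * real_diag n g) $$ (i, j) = real_diag n (\<lambda>j. f j * g j) $$ (i, j)"
    using index_mult_real_diag[OF real_diag_carrier i j, of f g] i j by (simp add: real_diag_def)
qed auto

lemma index_mult_real_diag_adjoint:
  assumes M: "M \<in> carrier_mat n n" and i: "i < n" and k: "k < n"
  shows "(M * real_diag n e * mat_adjoint M) $$ (i,k) = (\<Sum>j<n. M $$ (i,j) * of_real (e j) * cnj (M $$ (k,j)))"
proof -
  have "(M * real_diag n e * mat_adjoint M) $$ (i,k)
      = (\<Sum>j = 0..<n. (M * real_diag n e) $$ (i,j) * mat_adjoint M $$ (j,k))"
    using M i k by (simp add: scalar_prod_def)
  also have "\<dots> = (\<Sum>j<n. M $$ (i,j) * of_real (e j) * cnj (M $$ (k,j)))"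
    using M i k index_mult_real_diag[OF M i] by (auto simp: lessThan_atLeast0 intro!: sum.cong)
  finally show ?thesis .
qed

lemma quad_form_real_diag:
  assumes w: "w \<in> carrier_vec n"
  shows "quad_form (real_diag n d) w = of_real (\<Sum>j<n. d j * (cmod (w $ j))\<^sup>2)"
proof -
  have "quad_form (real_diag n d) w = (\<Sum>j<n. cnj (w $ j) * (of_real (d j) * w $ j))"
    using w unfolding quad_form_def
    by (simp add: scalar_prod_def mult_mat_vec_def real_diag_def lessThan_atLeast0
        if_distrib[of "\<lambda>x. x * _"] cong: if_cong)
  also have "\<dots> = (\<Sum>j<n. of_real (d j * (cmod (w $ j))\<^sup>2))"
    by (intro sum.cong refl) (simp add: complex_norm_square[unfolded of_real_power] mult_ac)
  finally show ?thesis by simp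
qed

lemma quad_form_real_diag_unit_vec:
  assumes "j < n"
  shows "quad_form (real_diag n d) (unit_vec n j) = of_real (d j)"
proof -
  have "(\<Sum>k<n. d k * (cmod (unit_vec n j $ k))\<^sup>2) = (\<Sum>k<n. if k = j then d j else 0)"
    by (rule sum.cong) (auto simp: unit_vec_def)
  then show ?thesis using assms by (simp add: quad_form_real_diag)
qed

lemma unitary_diag_carrier: "unitary_mat n U \<Longrightarrow> U * real_diag n f * mat_adjoint U \<in> carrier_mat n n"
  using mult_carrier_mat[OF mult_carrier_mat[OF unitary_matD(1) real_diag_carrier] unitary_matD(2)] by blast

lemma unitary_diag_hermitian:
  "unitary_mat n U \<Longrightarrow> mat_adjoint (U * real_diag n f * mat_adjoint U) = U * real_diag n f * mat_adjoint U"
  using hermitian_congruence[OF unitary_matD(2) real_diag_carrier mat_adjoint_real_diag] by simp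

lemma unitary_diag_one: "unitary_mat n U \<Longrightarrow> U * real_diag n (\<lambda>_. 1) * mat_adjoint U = 1\<^sub>m n"
  by (frule unitary_matD(1), drule unitary_matD(3)) (simp add: real_diag_one)

lemma unitary_diag_mult:
  assumes U: "unitary_mat n U"
  shows "(U * real_diag n f * mat_adjoint U) * (U * real_diag n g * mat_adjoint U)
    = U * real_diag n (\<lambda>j. f j * g j) * mat_adjoint U"
proof -
  note u = unitary_matD[OF U]
  have D1: "real_diag n f \<in> carrier_mat n n" and D2: "real_diag n g \<in> carrier_mat n n" by auto
  have X: "real_diag n g * mat_adjoint U \<in> carrier_mat n n" using mult_carrier_mat[OF D2 u(2)] .
  have "(U * real_diag n f * mat_adjoint U) * (U * real_diag n g * mat_adjoint U)
      = U * (real_diag n f * (mat_adjoint U * (U * (real_diag n g * mat_adjoint U))))"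
    using assoc_mult_mat[OF mult_carrier_mat[OF u(1) D1] u(2) mult_carrier_mat[OF mult_carrier_mat[OF u(1) D2] u(2)]]
      assoc_mult_mat[OF u(1) D1 mult_carrier_mat[OF u(2) mult_carrier_mat[OF mult_carrier_mat[OF u(1) D2] u(2)]]]
      assoc_mult_mat[OF u(1) D2 u(2)] by simp
  also have "mat_adjoint U * (U * (real_diag n g * mat_adjoint U)) = real_diag n g * mat_adjoint U"
    by (rule unitary_mat_cancel(2)[OF U X])
  also have "U * (real_diag n f * (real_diag n g * mat_adjoint U)) = U * real_diag n (\<lambda>j. f j * g j) * mat_adjoint U"
    using assoc_mult_mat[OF D1 D2 u(2)] assoc_mult_mat[OF u(1) mult_carrier_mat[OF D1 D2] u(2)]
      real_diag_mult[of n f g] by simp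
  finally show ?thesis .
qed

lemma quad_form_unitary_diag:
  assumes U: "unitary_mat n U" and v: "v \<in> carrier_vec n"
  shows "quad_form (U * real_diag n d * mat_adjoint U) v = quad_form (real_diag n d) (mat_adjoint U *\<^sub>v v)"
  using quad_form_congruence[OF unitary_matD(2)[OF U] real_diag_carrier v] by simp

lemma sum_cmod_sq_unitary:
  assumes U: "unitary_mat n U" and a: "a \<in> carrier_vec n"
  shows "(\<Sum>j<n. (cmod ((U *\<^sub>v a) $ j))\<^sup>2) = (\<Sum>j<n. (cmod (a $ j))\<^sup>2)"
proof -
  note u = unitary_matD[OF U]
  have "quad_form (real_diag n (\<lambda>_. 1)) (U *\<^sub>v a) = quad_form (mat_adjoint U * real_diag n (\<lambda>_. 1) * U) a"
    by (rule quad_form_congruence[OF u(1) real_diag_carrier a, symmetric])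
  also have "mat_adjoint U * real_diag n (\<lambda>_. 1) * U = real_diag n (\<lambda>_. 1)"
    unfolding real_diag_one using u by simp
  finally show ?thesis
    using u a by (simp only: quad_form_real_diag mult_mat_vec_carrier of_real_eq_iff mult_1)
qed

section \<open>The spectral theorem\<close>

lemma unitary_mat_of_corthogonal:
  fixes ws :: "complex vec list"
  assumes ws: "set ws \<subseteq> carrier_vec n" "corthogonal ws" "length ws = n"
  shows "\<exists>c. (\<forall>j<n. c j \<noteq> 0) \<and> unitary_mat n (mat n n (\<lambda>(i,j). c j * ws ! j $ i))"
proof -
  define nr where "nr = (\<lambda>j. sqrt (\<Sum>k<n. (cmod (ws ! j $ k))\<^sup>2))"
  have wsc: "ws ! j \<in> carrier_vec n" if "j < n" for j using ws that by auto
  have self: "ws ! j \<bullet>c ws ! j = of_real ((nr j)\<^sup>2)" if "j < n" for j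
  proof -
    have "ws ! j \<bullet>c ws ! j = (\<Sum>k<n. of_real ((cmod (ws ! j $ k))\<^sup>2))"
      using wsc[OF that] unfolding scalar_prod_def
      by (simp add: lessThan_atLeast0 complex_norm_square[unfolded of_real_power])
    then show ?thesis unfolding nr_def by (simp add: sum_nonneg)
  qed
  have nrnz: "nr j \<noteq> 0" if "j < n" for j
    using self[OF that] corthogonalD[OF ws(2), of j j] ws(3) that by auto
  define U where "U = mat n n (\<lambda>(i,j). (1 / of_real (nr j)) * ws ! j $ i)"
  have U: "U \<in> carrier_mat n n" unfolding U_def by simp
  have "mat_adjoint U * U = 1\<^sub>m n"
  proof (rule eq_matI)
    fix i j assume "i < dim_row (1\<^sub>m n :: complex mat)" "j < dim_col (1\<^sub>m n :: complex mat)"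
    then have i: "i < n" and j: "j < n" by auto
    have "(mat_adjoint U * U) $$ (i,j)
        = (\<Sum>k<n. cnj (ws ! i $ k / of_real (nr i)) * (ws ! j $ k / of_real (nr j)))"
      using i j U by (simp add: U_def scalar_prod_def lessThan_atLeast0)
    also have "\<dots> = (\<Sum>k<n. ws ! j $ k * cnj (ws ! i $ k)) / (of_real (nr i) * of_real (nr j))"
      by (simp add: sum_divide_distrib mult_ac)
    also have "(\<Sum>k<n. ws ! j $ k * cnj (ws ! i $ k)) = ws ! j \<bullet>c ws ! i"
      using wsc[OF i] by (simp add: scalar_prod_def lessThan_atLeast0)
    finally have eq: "(mat_adjoint U * U) $$ (i,j) = ws ! j \<bullet>c ws ! i / (of_real (nr i) * of_real (nr j))" .
    show "(mat_adjoint U * U) $$ (i,j) = 1\<^sub>m n $$ (i,j)"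
    proof (cases "i = j")
      case True
      then show ?thesis using eq self[OF i] nrnz[OF i] i by (simp add: power2_eq_square)
    next
      case False
      then show ?thesis using eq corthogonalD[OF ws(2), of j i] ws(3) i j by simp
    qed
  qed (use U in auto)
  moreover from this have "U * mat_adjoint U = 1\<^sub>m n"
    using mat_mult_left_right_inverse[of "mat_adjoint U" n U] U by simp
  ultimately have "unitary_mat n U" using U unfolding unitary_mat_def by blast
  then show ?thesis unfolding U_def using nrnz by (intro exI[of _ "\<lambda>j. 1 / of_real (nr j)"]) auto
qed

lemma unitary_mat_first_col:
  fixes v :: "complex vec"
  assumes v: "v \<in> carrier_vec n" and v0: "v \<noteq> 0\<^sub>v n"
  shows "\<exists>U c. unitary_mat n U \<and> c \<noteq> 0 \<and> col U 0 = c \<cdot>\<^sub>v v"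
proof -
  interpret cof_vec_space n "TYPE(complex)" .
  define b where "b = basis_completion v"
  define ws where "ws = gram_schmidt n b"
  from basis_completion[OF v v0, folded b_def]
  have dist_b: "distinct b" and indep: "\<not> lin_dep (set b)" and b: "set b \<subseteq> carrier_vec n"
    and hdb: "hd b = v" and len_b: "length b = n" by auto
  have n: "n > 0" using v v0 by (cases n) auto
  from hdb len_b n obtain vs where bv: "b = v # vs" by (cases b) auto
  from gram_schmidt_result[OF b dist_b indep refl, folded ws_def]
  have ws: "set ws \<subseteq> carrier_vec n" "corthogonal ws" "length ws = n"
    by (auto simp: len_b)
  from gram_schmidt_hd[OF v, of vs, folded bv] have "hd ws = v" unfolding ws_def .
  then have ws0: "ws ! 0 = v" using ws(3) n by (cases ws) auto
  obtain c where c: "\<forall>j<n. c j \<noteq> 0" and U: "unitary_mat n (mat n n (\<lambda>(i,j). c j * ws ! j $ i))"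
    using unitary_mat_of_corthogonal[OF ws] by blast
  have "col (mat n n (\<lambda>(i,j). c j * ws ! j $ i)) 0 = c 0 \<cdot>\<^sub>v v"
    by (rule eq_vecI) (use n v in \<open>auto simp: ws0\<close>)
  then show ?thesis using U c n by blast
qed

lemma col_conjugate_eigenvector:
  fixes A :: "complex mat"
  assumes n: "0 < n" and A: "A \<in> carrier_mat n n" and v: "v \<in> carrier_vec n"
    and Av: "A *\<^sub>v v = e \<cdot>\<^sub>v v" and U: "unitary_mat n U" and colU: "col U 0 = c \<cdot>\<^sub>v v"
  shows "col (mat_adjoint U * A * U) 0 = e \<cdot>\<^sub>v unit_vec n 0"
proof -
  note u = unitary_matD[OF U]
  have "col (mat_adjoint U * A * U) 0 = (mat_adjoint U * A) *\<^sub>v col U 0"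
    using u A n by (intro col_mult2[of _ n n _ n]) auto
  also have "\<dots> = c \<cdot>\<^sub>v ((mat_adjoint U * A) *\<^sub>v v)"
    unfolding colU using u A v by (intro mult_mat_vec[of _ n n]) auto
  also have "(mat_adjoint U * A) *\<^sub>v v = e \<cdot>\<^sub>v (mat_adjoint U *\<^sub>v v)"
    using assoc_mult_mat_vec[OF u(2) A v] Av u v by (simp add: mult_mat_vec[of _ n n])
  also have "c \<cdot>\<^sub>v (e \<cdot>\<^sub>v (mat_adjoint U *\<^sub>v v)) = e \<cdot>\<^sub>v (mat_adjoint U *\<^sub>v (c \<cdot>\<^sub>v v))"
    using u v by (simp add: mult_mat_vec[of _ n n] smult_smult_assoc mult.commute)
  also have "mat_adjoint U *\<^sub>v (c \<cdot>\<^sub>v v) = col (mat_adjoint U * U) 0"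
    unfolding colU[symmetric] using u n by (intro col_mult2[of _ n n _ n, symmetric]) auto
  finally show ?thesis using u n by simp
qed

lemma hermitian_first_col_block:
  fixes B :: "complex mat"
  assumes B: "B \<in> carrier_mat (Suc m) (Suc m)" and hB: "mat_adjoint B = B"
    and colB: "col B 0 = e \<cdot>\<^sub>v unit_vec (Suc m) 0"
  shows "\<exists>B'. B' \<in> carrier_mat m m \<and> mat_adjoint B' = B' \<and>
    B = four_block_mat (real_diag 1 (\<lambda>_. Re e)) (0\<^sub>m 1 m) (0\<^sub>m m 1) B'"
proof -
  have Bi0: "B $$ (i, 0) = (if i = 0 then e else 0)" if "i < Suc m" for i
    using arg_cong[OF colB, of "\<lambda>w. w $ i"] that B by auto
  have "cnj e = e" using arg_cong[OF hB, of "\<lambda>M. M $$ (0,0)"] B Bi0[of 0] by simp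
  from arg_cong[OF this, of Im] have "Im e = 0" by simp
  then have e: "complex_of_real (Re e) = e" by (simp add: complex_eq_iff)
  have B0j: "B $$ (0, j) = (if j = 0 then e else 0)" if "j < Suc m" for j
    using arg_cong[OF hB, of "\<lambda>M. M $$ (0,j)"] B Bi0[OF that] that by (auto split: if_splits)
  define B' where "B' = mat m m (\<lambda>(i,j). B $$ (Suc i, Suc j))"
  have B': "B' \<in> carrier_mat m m" unfolding B'_def by simp
  have "mat_adjoint B' = B'"
  proof (rule eq_matI)
    fix i j assume "i < dim_row B'" "j < dim_col B'"
    then show "mat_adjoint B' $$ (i, j) = B' $$ (i, j)"
      using arg_cong[OF hB, of "\<lambda>M. M $$ (Suc i, Suc j)"] B B' by (simp add: B'_def)
  qed (use B' in auto)
  moreover have "B = four_block_mat (real_diag 1 (\<lambda>_. Re e)) (0\<^sub>m 1 m) (0\<^sub>m m 1) B'"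
  proof (rule eq_matI)
    fix i j assume "i < dim_row (four_block_mat (real_diag 1 (\<lambda>_. Re e)) (0\<^sub>m 1 m) (0\<^sub>m m 1) B')"
      "j < dim_col (four_block_mat (real_diag 1 (\<lambda>_. Re e)) (0\<^sub>m 1 m) (0\<^sub>m m 1) B')"
    then have i: "i < Suc m" and j: "j < Suc m" using B' by auto
    show "B $$ (i,j) = four_block_mat (real_diag 1 (\<lambda>_. Re e)) (0\<^sub>m 1 m) (0\<^sub>m m 1) B' $$ (i,j)"
    proof (cases i)
      case 0
      then show ?thesis using B0j[OF j] e j B' by (cases j) (auto simp: real_diag_def)
    next
      case (Suc i')
      then show ?thesis using Bi0[OF i] i j B' by (cases j) (auto simp: B'_def)
    qed
  qed (use B B' in auto)
  ultimately show ?thesis using B' by blast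
qed

lemma hermitian_deflate:
  fixes A :: "complex mat"
  assumes A: "A \<in> carrier_mat (Suc m) (Suc m)" and hA: "mat_adjoint A = A"
  shows "\<exists>U e B. unitary_mat (Suc m) U \<and> B \<in> carrier_mat m m \<and> mat_adjoint B = B \<and>
    mat_adjoint U * A * U = four_block_mat (real_diag 1 (\<lambda>_. e)) (0\<^sub>m 1 m) (0\<^sub>m m 1) B"
proof -
  obtain as where cp: "char_poly A = (\<Prod>a\<leftarrow>as. [:- a, 1:])" and "length as = Suc m"
    using char_poly_factorized[OF A] by blast
  then obtain e rest where "as = e # rest" by (cases as) auto
  then have "poly (char_poly A) e = 0" unfolding cp by simp
  then have "eigenvalue A e" using eigenvalue_root_char_poly[OF A] by simp
  then have "eigenvector A (find_eigenvector A e) e" by (rule find_eigenvector[OF A])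
  then obtain v where v: "v \<in> carrier_vec (Suc m)" "v \<noteq> 0\<^sub>v (Suc m)" and Av: "A *\<^sub>v v = e \<cdot>\<^sub>v v"
    unfolding eigenvector_def using A by auto
  obtain U c where U: "unitary_mat (Suc m) U" and colU: "col U 0 = c \<cdot>\<^sub>v v"
    using unitary_mat_first_col[OF v] by blast
  have "mat_adjoint U * A * U \<in> carrier_mat (Suc m) (Suc m)" using unitary_matD[OF U] A by auto
  then show ?thesis
    using hermitian_first_col_block[OF _ hermitian_congruence[OF unitary_matD(1)[OF U] A hA]
        col_conjugate_eigenvector[OF _ A v(1) Av U colU]] U by blast
qed

lemma mat_adjoint_block_diag:
  "(V :: complex mat) \<in> carrier_mat m m \<Longrightarrow> mat_adjoint (four_block_mat (1\<^sub>m 1) (0\<^sub>m 1 m) (0\<^sub>m m 1) V)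
    = four_block_mat (1\<^sub>m 1) (0\<^sub>m 1 m) (0\<^sub>m m 1) (mat_adjoint V)"
  by (rule eq_matI) auto

lemma unitary_mat_block_diag:
  assumes V: "unitary_mat m V"
  shows "unitary_mat (Suc m) (four_block_mat (1\<^sub>m 1) (0\<^sub>m 1 m) (0\<^sub>m m 1) V)"
proof -
  note v = unitary_matD[OF V]
  let ?E = "four_block_mat (1\<^sub>m 1) (0\<^sub>m 1 m) (0\<^sub>m m 1) V"
  have aE: "mat_adjoint ?E = four_block_mat (1\<^sub>m 1) (0\<^sub>m 1 m) (0\<^sub>m m 1) (mat_adjoint V)"
    by (rule mat_adjoint_block_diag[OF v(1)])
  have "?E * mat_adjoint ?E = four_block_mat (1\<^sub>m 1 * 1\<^sub>m 1 + 0\<^sub>m 1 m * 0\<^sub>m m 1)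
      (1\<^sub>m 1 * 0\<^sub>m 1 m + 0\<^sub>m 1 m * mat_adjoint V) (0\<^sub>m m 1 * 1\<^sub>m 1 + V * 0\<^sub>m m 1)
      (0\<^sub>m m 1 * 0\<^sub>m 1 m + V * mat_adjoint V)"
    unfolding aE by (rule mult_four_block_mat) (use v in auto)
  also have "\<dots> = 1\<^sub>m (Suc m)" using v by simp
  finally have "?E * mat_adjoint ?E = 1\<^sub>m (Suc m)" .
  moreover have "mat_adjoint ?E * ?E = four_block_mat (1\<^sub>m 1 * 1\<^sub>m 1 + 0\<^sub>m 1 m * 0\<^sub>m m 1)
      (1\<^sub>m 1 * 0\<^sub>m 1 m + 0\<^sub>m 1 m * V) (0\<^sub>m m 1 * 1\<^sub>m 1 + mat_adjoint V * 0\<^sub>m m 1)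
      (0\<^sub>m m 1 * 0\<^sub>m 1 m + mat_adjoint V * V)"
    unfolding aE by (rule mult_four_block_mat) (use v in auto)
  moreover have "\<dots> = 1\<^sub>m (Suc m)" using v by simp
  ultimately have "?E * mat_adjoint ?E = 1\<^sub>m (Suc m)" "mat_adjoint ?E * ?E = 1\<^sub>m (Suc m)" by simp_all
  moreover have "?E \<in> carrier_mat (Suc m) (Suc m)" using v by auto
  ultimately show ?thesis unfolding unitary_mat_def by simp
qed

lemma block_diag_conj_real_diag:
  assumes V: "unitary_mat m V"
  shows "four_block_mat (1\<^sub>m 1) (0\<^sub>m 1 m) (0\<^sub>m m 1) V * real_diag (Suc m) d
      * mat_adjoint (four_block_mat (1\<^sub>m 1) (0\<^sub>m 1 m) (0\<^sub>m m 1) V)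
    = four_block_mat (real_diag 1 d) (0\<^sub>m 1 m) (0\<^sub>m m 1) (V * real_diag m (\<lambda>i. d (Suc i)) * mat_adjoint V)"
proof -
  note v = unitary_matD[OF V]
  let ?D = "real_diag m (\<lambda>i. d (Suc i))"
  have "four_block_mat (1\<^sub>m 1) (0\<^sub>m 1 m) (0\<^sub>m m 1) V * real_diag (Suc m) d
      = four_block_mat (1\<^sub>m 1 * real_diag 1 d + 0\<^sub>m 1 m * 0\<^sub>m m 1) (1\<^sub>m 1 * 0\<^sub>m 1 m + 0\<^sub>m 1 m * ?D)
          (0\<^sub>m m 1 * real_diag 1 d + V * 0\<^sub>m m 1) (0\<^sub>m m 1 * 0\<^sub>m 1 m + V * ?D)"
    unfolding real_diag_Suc[of m d] by (rule mult_four_block_mat) (use v in auto)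
  also have "\<dots> = four_block_mat (real_diag 1 d) (0\<^sub>m 1 m) (0\<^sub>m m 1) (V * ?D)" using v by simp
  finally have ED: "four_block_mat (1\<^sub>m 1) (0\<^sub>m 1 m) (0\<^sub>m m 1) V * real_diag (Suc m) d
      = four_block_mat (real_diag 1 d) (0\<^sub>m 1 m) (0\<^sub>m m 1) (V * ?D)" .
  have "four_block_mat (real_diag 1 d) (0\<^sub>m 1 m) (0\<^sub>m m 1) (V * ?D)
      * four_block_mat (1\<^sub>m 1) (0\<^sub>m 1 m) (0\<^sub>m m 1) (mat_adjoint V)
    = four_block_mat (real_diag 1 d * 1\<^sub>m 1 + 0\<^sub>m 1 m * 0\<^sub>m m 1) (real_diag 1 d * 0\<^sub>m 1 m + 0\<^sub>m 1 m * mat_adjoint V)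
        (0\<^sub>m m 1 * 1\<^sub>m 1 + V * ?D * 0\<^sub>m m 1) (0\<^sub>m m 1 * 0\<^sub>m 1 m + V * ?D * mat_adjoint V)"
    by (rule mult_four_block_mat) (use v in auto)
  also have "\<dots> = four_block_mat (real_diag 1 d) (0\<^sub>m 1 m) (0\<^sub>m m 1) (V * ?D * mat_adjoint V)"
    using v left_add_zero_mat[OF mult_carrier_mat[OF mult_carrier_mat[OF v(1) real_diag_carrier] v(2)]] by simp
  finally show ?thesis unfolding mat_adjoint_block_diag[OF v(1)] ED .
qed

lemma hermitian_spectral:
  "A \<in> carrier_mat n n \<Longrightarrow> mat_adjoint A = A \<Longrightarrow> \<exists>U d. unitary_mat n U \<and> A = U * real_diag n d * mat_adjoint U"
proof (induction n arbitrary: A)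
  case 0
  then have "A = 1\<^sub>m 0 * real_diag 0 (\<lambda>_. 0) * mat_adjoint (1\<^sub>m 0)"
    by (intro eq_matI) auto
  then show ?case using unitary_mat_one by blast
next
  case (Suc m A)
  obtain U e B where U: "unitary_mat (Suc m) U" and B: "B \<in> carrier_mat m m" "mat_adjoint B = B"
    and UAU: "mat_adjoint U * A * U = four_block_mat (real_diag 1 (\<lambda>_. e)) (0\<^sub>m 1 m) (0\<^sub>m m 1) B"
    using hermitian_deflate[OF Suc.prems] by blast
  obtain V d' where V: "unitary_mat m V" and BV: "B = V * real_diag m d' * mat_adjoint V"
    using Suc.IH[OF B] by blast
  define E where "E = four_block_mat (1\<^sub>m 1) (0\<^sub>m 1 m) (0\<^sub>m m 1) V"
  define d where "d = (\<lambda>i. if i = 0 then e else d' (i - 1))"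
  have E: "unitary_mat (Suc m) E" unfolding E_def by (rule unitary_mat_block_diag[OF V])
  have "real_diag 1 d = real_diag 1 (\<lambda>_. e)" by (rule real_diag_cong) (simp add: d_def)
  then have "E * real_diag (Suc m) d * mat_adjoint E = mat_adjoint U * A * U"
    unfolding E_def block_diag_conj_real_diag[OF V] UAU BV by (simp add: d_def)
  then have "A = U * (E * real_diag (Suc m) d * mat_adjoint E) * mat_adjoint U"
    using unitary_conjugation_inverse[OF U Suc.prems(1)] by simp
  also have "\<dots> = (U * E) * real_diag (Suc m) d * mat_adjoint (U * E)"
    using unitary_matD(1)[OF U] unitary_matD(1)[OF E] by (intro conjugation_mult) auto
  finally show ?case using unitary_mat_mult[OF U E] by blast
qed

lemma permutes_sorted_desc:
  fixes d :: "nat \<Rightarrow> 'a :: linorder"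
  shows "\<exists>p. p permutes {..<n} \<and> (\<forall>i j. i \<le> j \<longrightarrow> j < n \<longrightarrow> d (p j) \<le> d (p i))"
proof -
  define xs where "xs = map d [0..<n]"
  define ys where "ys = rev (sort xs)"
  have "mset ys = mset xs" unfolding ys_def by simp
  then obtain p where p: "p permutes {..<length xs}" and pys: "permute_list p xs = ys"
    using mset_eq_permutation by blast
  have lxs: "length xs = n" and lys: "length ys = n" unfolding xs_def ys_def by simp_all
  have ysj: "ys ! j = d (p j)" if "j < n" for j
    using permute_list_nth[OF p, of j] pys lxs that permutes_in_image[OF p, of j] by (simp add: xs_def)
  have "d (p j) \<le> d (p i)" if "i \<le> j" "j < n" for i j
  proof -
    have "rev ys ! (n - 1 - j) \<le> rev ys ! (n - 1 - i)"
      using that lys unfolding ys_def by (intro sorted_nth_mono) auto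
    then show ?thesis using that lys ysj by (simp add: rev_nth)
  qed
  then show ?thesis using p lxs by auto
qed

lemma unitary_mat_permute_cols:
  assumes p: "p permutes {..<n}" and U: "unitary_mat n U"
  shows "unitary_mat n (mat n n (\<lambda>(i,j). U $$ (i, p j)))"
proof -
  note u = unitary_matD[OF U]
  define U' where "U' = mat n n (\<lambda>(i,j). U $$ (i, p j))"
  have U': "U' \<in> carrier_mat n n" unfolding U'_def by simp
  have pj: "p j < n" if "j < n" for j using permutes_in_image[OF p, of j] that by simp
  have "mat_adjoint U' * U' = 1\<^sub>m n"
  proof (rule eq_matI)
    fix i k assume "i < dim_row (1\<^sub>m n :: complex mat)" "k < dim_col (1\<^sub>m n :: complex mat)"
    then have i: "i < n" and k: "k < n" by auto
    have "(mat_adjoint U' * U') $$ (i,k) = (mat_adjoint U * U) $$ (p i, p k)"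
      using i k pj u(1) by (simp add: U'_def scalar_prod_def)
    also have "\<dots> = 1\<^sub>m n $$ (i,k)"
      using pj[OF i] pj[OF k] i k permutes_inj[OF p] u(4) by (simp add: inj_eq)
    finally show "(mat_adjoint U' * U') $$ (i,k) = 1\<^sub>m n $$ (i,k)" .
  qed (use U' in auto)
  moreover from this have "U' * mat_adjoint U' = 1\<^sub>m n"
    using mat_mult_left_right_inverse[of "mat_adjoint U'" n U'] U' by simp
  ultimately show ?thesis unfolding unitary_mat_def U'_def[symmetric] using U' by simp
qed

lemma unitary_diag_permute_cols:
  assumes p: "p permutes {..<n}" and U: "U \<in> carrier_mat n n"
  shows "U * real_diag n d * mat_adjoint U
    = mat n n (\<lambda>(i,j). U $$ (i, p j)) * real_diag n (d \<circ> p) * mat_adjoint (mat n n (\<lambda>(i,j). U $$ (i, p j)))"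
  (is "_ = ?U' * _ * _")
proof (rule eq_matI)
  have U': "?U' \<in> carrier_mat n n" by simp
  fix i k assume "i < dim_row (?U' * real_diag n (d \<circ> p) * mat_adjoint ?U')"
    "k < dim_col (?U' * real_diag n (d \<circ> p) * mat_adjoint ?U')"
  then have i: "i < n" and k: "k < n" by auto
  let ?f = "\<lambda>j. U $$ (i,j) * of_real (d j) * cnj (U $$ (k,j))"
  have "(?U' * real_diag n (d \<circ> p) * mat_adjoint ?U') $$ (i,k) = (\<Sum>j<n. ?f (p j))"
    unfolding index_mult_real_diag_adjoint[OF U' i k]
    using i k permutes_in_image[OF p] by (intro sum.cong) auto
  also have "\<dots> = (\<Sum>j<n. ?f j)"
    using sum.permute[OF p, of ?f] by (simp add: comp_def)
  finally show "(U * real_diag n d * mat_adjoint U) $$ (i,k) = (?U' * real_diag n (d \<circ> p) * mat_adjoint ?U') $$ (i,k)"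
    unfolding index_mult_real_diag_adjoint[OF U i k] by simp
qed (use U in auto)

lemma hermitian_spectral_sorted:
  assumes "H \<in> carrier_mat n n" "mat_adjoint H = H"
  shows "\<exists>U d. unitary_mat n U \<and> H = U * real_diag n d * mat_adjoint U \<and> (\<forall>i j. i \<le> j \<longrightarrow> j < n \<longrightarrow> d j \<le> d i)"
proof -
  obtain U d where U: "unitary_mat n U" and H: "H = U * real_diag n d * mat_adjoint U"
    using hermitian_spectral[OF assms] by blast
  obtain p where p: "p permutes {..<n}" and "\<forall>i j. i \<le> j \<longrightarrow> j < n \<longrightarrow> d (p j) \<le> d (p i)"
    using permutes_sorted_desc by blast
  then show ?thesis
    using unitary_mat_permute_cols[OF p U] unitary_diag_permute_cols[OF p unitary_matD(1)[OF U]] H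
    by (metis comp_apply)
qed

section \<open>Ordered eigenvalues\<close>

lemma proots_prod_linear: "proots (\<Prod>a\<leftarrow>xs. [:- a, 1:]) = mset (xs :: complex list)"
proof -
  have "0 \<notin> set (map (\<lambda>a. [:- a, 1:]) xs)" by auto
  then have "proots (\<Prod>a\<leftarrow>xs. [:- a, 1:]) = sum_list (map proots (map (\<lambda>a. [:- a, 1:]) xs))"
    using proots_prod_list[of "map (\<lambda>a. [:- a, 1:]) xs"] by simp
  also have "\<dots> = mset xs" by (induction xs) (simp_all add: proots_linear_factor)
  finally show ?thesis .
qed

lemma eig_list_unitary_diag:
  assumes U: "unitary_mat n U"
  shows "eig_list (U * real_diag n d * mat_adjoint U) = rev (sort (map d [0..<n]))"
proof -
  note u = unitary_matD[OF U]
  have "similar_mat (U * real_diag n d * mat_adjoint U) (real_diag n d)"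
    by (rule similar_matI[of _ _ _ _ n]) (use u in auto)
  then have "char_poly (U * real_diag n d * mat_adjoint U) = char_poly (real_diag n d)"
    by (rule char_poly_similar)
  also have "\<dots> = (\<Prod>a\<leftarrow>diag_mat (real_diag n d). [:- a, 1:])"
    by (rule char_poly_upper_triangular[of _ n]) (auto simp: upper_triangular_def real_diag_def)
  also have "diag_mat (real_diag n d) = map (\<lambda>i. complex_of_real (d i)) [0..<n]"
    by (simp add: diag_mat_def real_diag_def)
  finally have "proots (char_poly (U * real_diag n d * mat_adjoint U)) = mset (map (\<lambda>i. complex_of_real (d i)) [0..<n])"
    by (simp only: proots_prod_linear)
  then have "image_mset Re (proots (char_poly (U * real_diag n d * mat_adjoint U))) = mset (map d [0..<n])"
    by (simp add: multiset.map_comp comp_def)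
  then show ?thesis unfolding eig_list_def by (simp only: sorted_list_of_multiset_mset)
qed

lemma eig_unitary_diag:
  assumes U: "unitary_mat n U" and mono: "\<forall>i j. i \<le> j \<longrightarrow> j < n \<longrightarrow> d j \<le> d i"
    and i: "1 \<le> i" "i \<le> n"
  shows "eig (U * real_diag n d * mat_adjoint U) i = d (i - 1)"
proof -
  have "sorted (rev (map d [0..<n]))"
    using mono by (auto simp: sorted_iff_nth_mono rev_nth)
  then have "sort (map d [0..<n]) = rev (map d [0..<n])"
    by (intro properties_for_sort) auto
  then show ?thesis unfolding eig_def eig_list_unitary_diag[OF U] using i by simp
qed

lemma eig_one:
  assumes "1 \<le> i" "i \<le> n"
  shows "eig (1\<^sub>m n) i = 1"
  using eig_unitary_diag[OF unitary_mat_one _ assms, of "\<lambda>_. 1"] by (simp add: real_diag_one)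

lemma eig_char_poly_cong: "char_poly X = char_poly Y \<Longrightarrow> eig X i = eig Y i"
  unfolding eig_def eig_list_def by simp

lemma char_poly_matrix_mult:
  assumes "X \<in> carrier_mat n n" "Y \<in> carrier_mat n n"
  shows "char_poly_matrix (X * Y)
    = [:0,1:] \<cdot>\<^sub>m 1\<^sub>m n + map_mat (\<lambda>a. [:a:] * [:-1:]) X * map_mat (\<lambda>a. [:a:]) Y"
proof -
  have "map_mat (\<lambda>a. [:- a:]) (X * Y) = map_mat (\<lambda>a. [:a:] * [:-1:]) (X * Y)"
    by (rule eq_matI) auto
  also have "\<dots> = map_mat (\<lambda>a. [:a:] * [:-1:]) X * map_mat (\<lambda>a. [:a:]) Y"
    by (rule map_poly_mult(2)[OF assms])
  finally show ?thesis unfolding char_poly_matrix_def using assms by simp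
qed

text \<open>The matrix \<open>[x I, X; Y, I]\<close>: eliminating \<open>X\<close> shows that its determinant is
  \<open>det (x I - X Y)\<close>, eliminating \<open>Y\<close> that \<open>x\<^sup>n\<close> times it is \<open>x\<^sup>n det (x I - Y X)\<close>.\<close>
definition char_poly_block :: "nat \<Rightarrow> complex mat \<Rightarrow> complex mat \<Rightarrow> complex poly mat" where
  "char_poly_block n X Y = four_block_mat ([:0,1:] \<cdot>\<^sub>m 1\<^sub>m n) (map_mat (\<lambda>a. [:a:]) X) (map_mat (\<lambda>a. [:a:]) Y) (1\<^sub>m n)"

lemma det_char_poly_block_left:
  assumes X: "X \<in> carrier_mat n n" and Y: "Y \<in> carrier_mat n n"
  shows "det (char_poly_block n X Y) = char_poly (X * Y)"
proof -
  let ?x = "[:0,1:] :: complex poly"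
  define P where "P = (\<lambda>Z :: complex mat. map_mat (\<lambda>a. [:a:]) Z)"
  define N where "N = (\<lambda>Z :: complex mat. map_mat (\<lambda>a. [:a:] * [:-1:]) Z)"
  have PX: "P X \<in> carrier_mat n n" and PY: "P Y \<in> carrier_mat n n" and NX: "N X \<in> carrier_mat n n"
    using X Y by (auto simp: P_def N_def)
  have I: "1\<^sub>m n \<in> carrier_mat n n" and xI: "?x \<cdot>\<^sub>m 1\<^sub>m n \<in> carrier_mat n n" by auto
  have Z: "(0\<^sub>m n n :: complex poly mat) \<in> carrier_mat n n" by auto
  have XY: "X * Y \<in> carrier_mat n n" using X Y by auto
  define L where "L = four_block_mat (1\<^sub>m n) (N X) (0\<^sub>m n n) (1\<^sub>m n)"
  have M: "char_poly_block n X Y \<in> carrier_mat (n+n) (n+n)" and L: "L \<in> carrier_mat (n+n) (n+n)"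
    unfolding char_poly_block_def L_def using X Y by auto
  have "L * char_poly_block n X Y = four_block_mat (1\<^sub>m n * (?x \<cdot>\<^sub>m 1\<^sub>m n) + N X * P Y) (1\<^sub>m n * P X + N X * 1\<^sub>m n)
       (0\<^sub>m n n * (?x \<cdot>\<^sub>m 1\<^sub>m n) + 1\<^sub>m n * P Y) (0\<^sub>m n n * P X + 1\<^sub>m n * 1\<^sub>m n)"
    unfolding L_def char_poly_block_def P_def[symmetric] by (rule mult_four_block_mat[OF I NX Z I xI PX PY I])
  also have "\<dots> = four_block_mat (char_poly_matrix (X * Y)) (0\<^sub>m n n) (P Y) (1\<^sub>m n)"
  proof (rule cong_four_block_mat)
    show "1\<^sub>m n * (?x \<cdot>\<^sub>m 1\<^sub>m n) + N X * P Y = char_poly_matrix (X * Y)"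
      using char_poly_matrix_mult[OF X Y] xI unfolding N_def P_def by simp
    have "P X + N X = 0\<^sub>m n n" unfolding P_def N_def by (rule eq_matI) (use X in auto)
    then show "1\<^sub>m n * P X + N X * 1\<^sub>m n = 0\<^sub>m n n" using PX NX by simp
  qed (use PX PY in simp_all)
  finally have "det (L * char_poly_block n X Y) = char_poly (X * Y)"
    unfolding char_poly_def
    by (simp add: det_four_block_mat_upper_right_zero[OF char_poly_matrix_closed[OF XY] refl PY I])
  moreover have "det L = 1" unfolding L_def
    by (subst det_four_block_mat_lower_left_zero[OF I NX refl I]) simp
  ultimately show ?thesis using det_mult[OF L M] by simp
qed

lemma det_char_poly_block_right:
  assumes X: "X \<in> carrier_mat n n" and Y: "Y \<in> carrier_mat n n"
  shows "[:0,1:] ^ n * det (char_poly_block n X Y) = [:0,1:] ^ n * char_poly (Y * X)"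
proof -
  let ?x = "[:0,1:] :: complex poly"
  define P where "P = (\<lambda>Z :: complex mat. map_mat (\<lambda>a. [:a:]) Z)"
  define N where "N = (\<lambda>Z :: complex mat. map_mat (\<lambda>a. [:a:] * [:-1:]) Z)"
  have PX: "P X \<in> carrier_mat n n" and PY: "P Y \<in> carrier_mat n n" and NY: "N Y \<in> carrier_mat n n"
    using X Y by (auto simp: P_def N_def)
  have I: "1\<^sub>m n \<in> carrier_mat n n" and xI: "?x \<cdot>\<^sub>m 1\<^sub>m n \<in> carrier_mat n n" by auto
  have Z: "(0\<^sub>m n n :: complex poly mat) \<in> carrier_mat n n" by auto
  have YX: "Y * X \<in> carrier_mat n n" using X Y by auto
  define L where "L = four_block_mat (1\<^sub>m n) (0\<^sub>m n n) (N Y) (?x \<cdot>\<^sub>m 1\<^sub>m n)"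
  have M: "char_poly_block n X Y \<in> carrier_mat (n+n) (n+n)" and L: "L \<in> carrier_mat (n+n) (n+n)"
    unfolding char_poly_block_def L_def using X Y by auto
  have "L * char_poly_block n X Y = four_block_mat (1\<^sub>m n * (?x \<cdot>\<^sub>m 1\<^sub>m n) + 0\<^sub>m n n * P Y) (1\<^sub>m n * P X + 0\<^sub>m n n * 1\<^sub>m n)
       (N Y * (?x \<cdot>\<^sub>m 1\<^sub>m n) + (?x \<cdot>\<^sub>m 1\<^sub>m n) * P Y) (N Y * P X + (?x \<cdot>\<^sub>m 1\<^sub>m n) * 1\<^sub>m n)"
    unfolding L_def char_poly_block_def P_def[symmetric] by (rule mult_four_block_mat[OF I Z NY xI xI PX PY I])
  also have "\<dots> = four_block_mat (?x \<cdot>\<^sub>m 1\<^sub>m n) (P X) (0\<^sub>m n n) (char_poly_matrix (Y * X))"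
  proof (rule cong_four_block_mat)
    have "N Y + P Y = 0\<^sub>m n n" unfolding P_def N_def by (rule eq_matI) (use Y in auto)
    moreover have "N Y * (?x \<cdot>\<^sub>m 1\<^sub>m n) = ?x \<cdot>\<^sub>m N Y" using NY by (simp add: mult_smult_distrib[OF NY I])
    moreover have "(?x \<cdot>\<^sub>m 1\<^sub>m n) * P Y = ?x \<cdot>\<^sub>m P Y" using PY by (simp add: mult_smult_assoc_mat[OF I PY])
    ultimately show "N Y * (?x \<cdot>\<^sub>m 1\<^sub>m n) + (?x \<cdot>\<^sub>m 1\<^sub>m n) * P Y = 0\<^sub>m n n"
      using NY PY by (simp add: add_smult_distrib_left_mat[symmetric])
    show "N Y * P X + (?x \<cdot>\<^sub>m 1\<^sub>m n) * 1\<^sub>m n = char_poly_matrix (Y * X)"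
      using char_poly_matrix_mult[OF Y X] xI NY PX unfolding N_def P_def by (simp add: comm_add_mat[of _ n n])
  qed (use xI PX PY in simp_all)
  finally have "det (L * char_poly_block n X Y) = ?x ^ n * char_poly (Y * X)"
    unfolding char_poly_def
    by (simp add: det_four_block_mat_lower_left_zero[OF xI PX refl char_poly_matrix_closed[OF YX]])
  moreover have "det L = ?x ^ n" unfolding L_def
    by (subst det_four_block_mat_upper_right_zero[OF I refl NY xI]) simp
  ultimately show ?thesis using det_mult[OF L M] by simp
qed

lemma char_poly_mult_comm:
  fixes X Y :: "complex mat"
  assumes "X \<in> carrier_mat n n" "Y \<in> carrier_mat n n"
  shows "char_poly (X * Y) = char_poly (Y * X)"
proof -
  have "[:0,1:] ^ n * char_poly (X * Y) = [:0,1:] ^ n * char_poly (Y * X)"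
    using det_char_poly_block_left[OF assms] det_char_poly_block_right[OF assms] by simp
  then show ?thesis by simp
qed

lemma eig_mult_comm:
  assumes "X \<in> carrier_mat n n" "Y \<in> carrier_mat n n"
  shows "eig (X * Y) i = eig (Y * X) i"
  by (rule eig_char_poly_cong[OF char_poly_mult_comm[OF assms]])

lemma eig_mult_square:
  assumes X: "X \<in> carrier_mat n n" and S: "S \<in> carrier_mat n n"
  shows "eig (X * (S * S)) i = eig (S * X * S) i"
proof -
  have "X * (S * S) = (X * S) * S" by (rule assoc_mult_mat[OF X S S, symmetric])
  then have "eig (X * (S * S)) i = eig (S * (X * S)) i"
    using eig_mult_comm[OF mult_carrier_mat[OF X S] S] by simp
  then show ?thesis using assoc_mult_mat[OF S X S] by simp
qed

section \<open>Monotonicity of eigenvalues in the Loewner order\<close>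

lemma underdetermined_system_nontrivial_solution:
  fixes F :: "nat \<Rightarrow> nat \<Rightarrow> 'a :: idom"
  shows "\<exists>c. c \<in> carrier_vec (Suc n) \<and> c \<noteq> 0\<^sub>v (Suc n) \<and> (\<forall>r<n. (\<Sum>k<Suc n. F r k * c $ k) = 0)"
proof -
  define K where "K = mat (Suc n) (Suc n) (\<lambda>(r,k). if r < n then F r k else 0)"
  have K: "K \<in> carrier_mat (Suc n) (Suc n)" unfolding K_def by simp
  have "K = mat\<^sub>r (Suc n) (Suc n) (\<lambda>r. if r = n then 0\<^sub>v (Suc n) else row K r)"
    by (rule eq_matI) (auto simp: K_def)
  also have "det \<dots> = 0"
    by (rule det_row_0) (use K in auto)
  finally obtain c where c: "c \<in> carrier_vec (Suc n)" "c \<noteq> 0\<^sub>v (Suc n)" and Kc: "K *\<^sub>v c = 0\<^sub>v (Suc n)"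
    using det_0_iff_vec_prod_zero[OF K] by blast
  have "(\<Sum>k<Suc n. F r k * c $ k) = 0" if "r < n" for r
    using arg_cong[OF Kc, of "\<lambda>w. w $ r"] that c by (simp add: K_def scalar_prod_def lessThan_atLeast0)
  with c show ?thesis by blast
qed

lemma unitary_common_vector:
  assumes U1: "unitary_mat n U1" and U2: "unitary_mat n U2" and i: "1 \<le> i" "i \<le> n"
  shows "\<exists>a b. a \<in> carrier_vec n \<and> b \<in> carrier_vec n \<and> U1 *\<^sub>v a = U2 *\<^sub>v b \<and> a \<noteq> 0\<^sub>v n \<and>
    (\<forall>j<n. i \<le> j \<longrightarrow> a $ j = 0) \<and> (\<forall>j<n. j < i - 1 \<longrightarrow> b $ j = 0)"
proof -
  note u1 = unitary_matD[OF U1] and u2 = unitary_matD[OF U2]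
  define F where "F = (\<lambda>r k. if k < i then U1 $$ (r,k) else - U2 $$ (r, k - 1))"
  obtain c where c: "c \<in> carrier_vec (Suc n)" and c0: "c \<noteq> 0\<^sub>v (Suc n)"
    and Fc: "\<forall>r<n. (\<Sum>k<Suc n. F r k * c $ k) = 0"
    using underdetermined_system_nontrivial_solution by blast
  define a where "a = vec n (\<lambda>j. if j < i then c $ j else 0)"
  define b where "b = vec n (\<lambda>j. if i - 1 \<le> j then c $ (Suc j) else 0)"
  have a: "a \<in> carrier_vec n" and b: "b \<in> carrier_vec n" unfolding a_def b_def by auto
  have ab: "U1 *\<^sub>v a = U2 *\<^sub>v b"
  proof (rule eq_vecI)
    fix r assume "r < dim_vec (U2 *\<^sub>v b)"
    then have r: "r < n" using u2 by simp
    have "0 = (\<Sum>k<Suc n. F r k * c $ k)" using Fc r by simp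
    also have "\<dots> = (\<Sum>k\<in>{0..<i}. F r k * c $ k) + (\<Sum>k\<in>{i..<Suc n}. F r k * c $ k)"
      using i by (simp add: lessThan_atLeast0 sum.atLeastLessThan_concat)
    also have "(\<Sum>k\<in>{0..<i}. F r k * c $ k) = (\<Sum>j\<in>{j\<in>{0..<n}. j < i}. U1 $$ (r,j) * c $ j)"
      using r i by (intro sum.cong) (auto simp: F_def)
    also have "\<dots> = (\<Sum>j = 0..<n. if j < i then U1 $$ (r,j) * c $ j else 0)"
      by (rule sum.inter_filter) simp
    also have "\<dots> = (U1 *\<^sub>v a) $ r"
      using r u1 by (simp add: a_def scalar_prod_def if_distrib[of "\<lambda>x. _ * x"] cong: if_cong)
    also have "(\<Sum>k\<in>{i..<Suc n}. F r k * c $ k)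
        = (\<Sum>k\<in>{Suc (i - 1)..<Suc n}. - (U2 $$ (r, k - 1) * c $ (Suc (k - 1))))"
      using r i by (intro sum.cong) (auto simp: F_def)
    also have "\<dots> = - (\<Sum>j\<in>{i - 1..<n}. U2 $$ (r,j) * c $ (Suc j))"
      by (simp only: sum.shift_bounds_Suc_ivl) (simp add: sum_negf)
    also have "(\<Sum>j\<in>{i - 1..<n}. U2 $$ (r,j) * c $ (Suc j)) = (\<Sum>j\<in>{j\<in>{0..<n}. i - 1 \<le> j}. U2 $$ (r,j) * c $ (Suc j))"
      by (intro sum.cong) auto
    also have "\<dots> = (\<Sum>j = 0..<n. if i - 1 \<le> j then U2 $$ (r,j) * c $ (Suc j) else 0)"
      by (rule sum.inter_filter) simp
    also have "\<dots> = (U2 *\<^sub>v b) $ r"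
      using r u2 by (simp add: b_def scalar_prod_def if_distrib[of "\<lambda>x. _ * x"] cong: if_cong)
    finally show "(U1 *\<^sub>v a) $ r = (U2 *\<^sub>v b) $ r" by simp
  qed (use u1 u2 in auto)
  have "a \<noteq> 0\<^sub>v n"
  proof
    assume a0: "a = 0\<^sub>v n"
    have "U1 *\<^sub>v a = 0\<^sub>v n" unfolding a0 by (rule eq_vecI) (use u1(1) in auto)
    then have "U2 *\<^sub>v b = 0\<^sub>v n" using ab by simp
    then have b0: "b = 0\<^sub>v n" using unitary_mat_vec_cancel[OF U2 b] u2 by auto
    have "c $ k = 0" if k: "k < Suc n" for k
    proof (cases "k < i")
      case True
      then show ?thesis using arg_cong[OF a0, of "\<lambda>w. w $ k"] i by (simp add: a_def)
    next
      case False
      then obtain j where "k = Suc j" using i by (cases k) auto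
      then show ?thesis using arg_cong[OF b0, of "\<lambda>w. w $ j"] False k i by (simp add: b_def split: if_splits)
    qed
    then have "c = 0\<^sub>v (Suc n)" using c by (intro eq_vecI) auto
    with c0 show False by simp
  qed
  moreover have "\<forall>j<n. i \<le> j \<longrightarrow> a $ j = 0" "\<forall>j<n. j < i - 1 \<longrightarrow> b $ j = 0"
    unfolding a_def b_def by auto
  ultimately show ?thesis using a b ab by blast
qed

definition loewner_le :: "nat \<Rightarrow> complex mat \<Rightarrow> complex mat \<Rightarrow> bool" where
  "loewner_le n X Y \<longleftrightarrow> X \<in> carrier_mat n n \<and> Y \<in> carrier_mat n n \<and>
     mat_adjoint X = X \<and> mat_adjoint Y = Y \<and>
     (\<forall>v \<in> carrier_vec n. Re (quad_form X v) \<le> Re (quad_form Y v))"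

lemma loewner_le_unitary_diag:
  assumes U: "unitary_mat n U" and fg: "\<And>j. j < n \<Longrightarrow> f j \<le> g j"
  shows "loewner_le n (U * real_diag n f * mat_adjoint U) (U * real_diag n g * mat_adjoint U)"
proof -
  have "Re (quad_form (U * real_diag n f * mat_adjoint U) v) \<le> Re (quad_form (U * real_diag n g * mat_adjoint U) v)"
    if v: "v \<in> carrier_vec n" for v
  proof -
    have w: "mat_adjoint U *\<^sub>v v \<in> carrier_vec n" using mult_mat_vec_carrier[OF unitary_matD(2)[OF U] v] .
    show ?thesis unfolding quad_form_unitary_diag[OF U v] quad_form_real_diag[OF w]
      by (simp, intro sum_mono mult_right_mono) (auto simp: fg)
  qed
  then show ?thesis
    unfolding loewner_le_def using unitary_diag_carrier[OF U] unitary_diag_hermitian[OF U] by blast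
qed

lemma loewner_le_congruence:
  assumes le: "loewner_le n X Y" and S: "S \<in> carrier_mat n n" "mat_adjoint S = S"
  shows "loewner_le n (S * X * S) (S * Y * S)"
proof -
  have X: "X \<in> carrier_mat n n" "mat_adjoint X = X" and Y: "Y \<in> carrier_mat n n" "mat_adjoint Y = Y"
    and qf: "\<And>v. v \<in> carrier_vec n \<Longrightarrow> Re (quad_form X v) \<le> Re (quad_form Y v)"
    using le unfolding loewner_le_def by auto
  have "Re (quad_form (mat_adjoint S * X * S) v) \<le> Re (quad_form (mat_adjoint S * Y * S) v)"
    if v: "v \<in> carrier_vec n" for v
    unfolding quad_form_congruence[OF S(1) X(1) v] quad_form_congruence[OF S(1) Y(1) v]
    by (rule qf) (use S(1) v in simp)
  then have "loewner_le n (mat_adjoint S * X * S) (mat_adjoint S * Y * S)"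
    unfolding loewner_le_def using S X Y hermitian_congruence[OF S(1) X(1,2)] hermitian_congruence[OF S(1) Y(1,2)]
    by simp
  then show ?thesis by (simp only: S(2))
qed

lemma quad_form_unitary_diag_head:
  assumes U: "unitary_mat n U" and d: "\<forall>i j. i \<le> j \<longrightarrow> j < n \<longrightarrow> d j \<le> d i"
    and a: "a \<in> carrier_vec n" and a0: "\<forall>j<n. i \<le> j \<longrightarrow> a $ j = 0" and i: "i \<le> n"
  shows "d (i - 1) * (\<Sum>j<n. (cmod (a $ j))\<^sup>2) \<le> Re (quad_form (U * real_diag n d * mat_adjoint U) (U *\<^sub>v a))"
proof -
  have Ua: "U *\<^sub>v a \<in> carrier_vec n" using unitary_matD(1)[OF U] a by simp
  have "d (i - 1) * (\<Sum>j<n. (cmod (a $ j))\<^sup>2) \<le> (\<Sum>j<n. d j * (cmod (a $ j))\<^sup>2)"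
    unfolding sum_distrib_left
  proof (rule sum_mono)
    fix j assume "j \<in> {..<n}"
    then show "d (i - 1) * (cmod (a $ j))\<^sup>2 \<le> d j * (cmod (a $ j))\<^sup>2"
      using d a0 i by (cases "j < i") (auto intro!: mult_right_mono)
  qed
  also have "\<dots> = Re (quad_form (U * real_diag n d * mat_adjoint U) (U *\<^sub>v a))"
    unfolding quad_form_unitary_diag[OF U Ua] unitary_mat_vec_cancel[OF U a] quad_form_real_diag[OF a] by simp
  finally show ?thesis .
qed

lemma quad_form_unitary_diag_tail:
  assumes U: "unitary_mat n U" and d: "\<forall>i j. i \<le> j \<longrightarrow> j < n \<longrightarrow> d j \<le> d i"
    and b: "b \<in> carrier_vec n" and b0: "\<forall>j<n. j < i - 1 \<longrightarrow> b $ j = 0"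
  shows "Re (quad_form (U * real_diag n d * mat_adjoint U) (U *\<^sub>v b)) \<le> d (i - 1) * (\<Sum>j<n. (cmod (b $ j))\<^sup>2)"
proof -
  have Ub: "U *\<^sub>v b \<in> carrier_vec n" using unitary_matD(1)[OF U] b by simp
  have "Re (quad_form (U * real_diag n d * mat_adjoint U) (U *\<^sub>v b)) = (\<Sum>j<n. d j * (cmod (b $ j))\<^sup>2)"
    unfolding quad_form_unitary_diag[OF U Ub] unitary_mat_vec_cancel[OF U b] quad_form_real_diag[OF b] by simp
  also have "\<dots> \<le> d (i - 1) * (\<Sum>j<n. (cmod (b $ j))\<^sup>2)"
    unfolding sum_distrib_left
  proof (rule sum_mono)
    fix j assume "j \<in> {..<n}"
    then show "d j * (cmod (b $ j))\<^sup>2 \<le> d (i - 1) * (cmod (b $ j))\<^sup>2"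
      using d b0 by (cases "i - 1 \<le> j") (auto intro!: mult_right_mono)
  qed
  finally show ?thesis .
qed

text \<open>Courant--Fischer in the form needed here: a vector in the span of the first \<open>i\<close> eigenvectors
  of \<open>H1\<close> and of the last \<open>n - i + 1\<close> eigenvectors of \<open>H2\<close> has Rayleigh quotient at least
  \<open>\<lambda>\<^sub>i(H1)\<close> for \<open>H1\<close> and at most \<open>\<lambda>\<^sub>i(H2)\<close> for \<open>H2\<close>.\<close>
lemma eig_mono:
  assumes le: "loewner_le n H1 H2" and i: "1 \<le> i" "i \<le> n"
  shows "eig H1 i \<le> eig H2 i"
proof -
  have H1: "H1 \<in> carrier_mat n n" "mat_adjoint H1 = H1" and H2: "H2 \<in> carrier_mat n n" "mat_adjoint H2 = H2"
    and qf: "\<And>v. v \<in> carrier_vec n \<Longrightarrow> Re (quad_form H1 v) \<le> Re (quad_form H2 v)"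
    using le unfolding loewner_le_def by auto
  obtain U1 d1 where U1: "unitary_mat n U1" and H1d: "H1 = U1 * real_diag n d1 * mat_adjoint U1"
    and m1: "\<forall>i j. i \<le> j \<longrightarrow> j < n \<longrightarrow> d1 j \<le> d1 i"
    using hermitian_spectral_sorted[OF H1] by blast
  obtain U2 d2 where U2: "unitary_mat n U2" and H2d: "H2 = U2 * real_diag n d2 * mat_adjoint U2"
    and m2: "\<forall>i j. i \<le> j \<longrightarrow> j < n \<longrightarrow> d2 j \<le> d2 i"
    using hermitian_spectral_sorted[OF H2] by blast
  obtain a b where a: "a \<in> carrier_vec n" and b: "b \<in> carrier_vec n" and ab: "U1 *\<^sub>v a = U2 *\<^sub>v b"
    and "a \<noteq> 0\<^sub>v n" and a0: "\<forall>j<n. i \<le> j \<longrightarrow> a $ j = 0" and b0: "\<forall>j<n. j < i - 1 \<longrightarrow> b $ j = 0"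
    using unitary_common_vector[OF U1 U2 i] by blast
  then obtain j where j: "j < n" and aj: "a $ j \<noteq> 0" by (metis eq_vecI carrier_vecD index_zero_vec)
  define N where "N = (\<Sum>j<n. (cmod (a $ j))\<^sup>2)"
  have Nb: "(\<Sum>j<n. (cmod (b $ j))\<^sup>2) = N"
    unfolding N_def using sum_cmod_sq_unitary[OF U1 a] sum_cmod_sq_unitary[OF U2 b] ab by simp
  have "0 < (cmod (a $ j))\<^sup>2" using aj by simp
  also have "\<dots> \<le> N" unfolding N_def by (rule member_le_sum) (use j in auto)
  finally have N: "0 < N" .
  have "d1 (i - 1) * N \<le> Re (quad_form H1 (U1 *\<^sub>v a))"
    unfolding N_def H1d by (rule quad_form_unitary_diag_head[OF U1 m1 a a0 i(2)])
  also have "\<dots> \<le> Re (quad_form H2 (U1 *\<^sub>v a))" by (rule qf) (use unitary_matD(1)[OF U1] a in simp)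
  also have "\<dots> \<le> d2 (i - 1) * N"
    unfolding ab Nb[symmetric] H2d by (rule quad_form_unitary_diag_tail[OF U2 m2 b b0])
  finally have "d1 (i - 1) \<le> d2 (i - 1)" using N by simp
  then show ?thesis
    using eig_unitary_diag[OF U1 m1 i] eig_unitary_diag[OF U2 m2 i] H1d H2d by simp
qed

section \<open>Positive semidefinite matrices and \<open>min(A,1)\<close>\<close>

lemma unitary_diag_psd_nonneg:
  assumes U: "unitary_mat n U" and psd: "psd_mat n (U * real_diag n a * mat_adjoint U)" and j: "j < n"
  shows "0 \<le> a j"
proof -
  have e: "U *\<^sub>v unit_vec n j \<in> carrier_vec n" using unitary_matD(1)[OF U] by simp
  have "quad_form (U * real_diag n a * mat_adjoint U) (U *\<^sub>v unit_vec n j) = of_real (a j)"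
    unfolding quad_form_unitary_diag[OF U e] unitary_mat_vec_cancel[OF U unit_vec_carrier]
    by (rule quad_form_real_diag_unit_vec[OF j])
  moreover have "0 \<le> Re (quad_form (U * real_diag n a * mat_adjoint U) (U *\<^sub>v unit_vec n j))"
    using psd e unfolding psd_mat_def quad_form_def by blast
  ultimately show ?thesis by simp
qed

lemma psd_mat_unitary_diag:
  assumes U: "unitary_mat n U" and f: "\<And>j. j < n \<Longrightarrow> 0 \<le> f j"
  shows "psd_mat n (U * real_diag n f * mat_adjoint U)"
proof -
  have qf: "conjugate v \<bullet> ((U * real_diag n f * mat_adjoint U) *\<^sub>v v)
      = of_real (\<Sum>j<n. f j * (cmod ((mat_adjoint U *\<^sub>v v) $ j))\<^sup>2)" if v: "v \<in> carrier_vec n" for v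
    using quad_form_unitary_diag[OF U v] quad_form_real_diag[OF mult_mat_vec_carrier[OF unitary_matD(2)[OF U] v]]
    unfolding quad_form_def by simp
  show ?thesis
    unfolding psd_mat_def hermitian_mat_def
    using unitary_diag_carrier[OF U] unitary_diag_hermitian[OF U] f by (auto simp: qf intro!: sum_nonneg)
qed

lemma psd_mat_sqrt:
  assumes B: "psd_mat n B"
  shows "\<exists>S. S \<in> carrier_mat n n \<and> mat_adjoint S = S \<and> S * S = B"
proof -
  have "B \<in> carrier_mat n n" "mat_adjoint B = B" using B unfolding psd_mat_def hermitian_mat_def by auto
  then obtain U b where U: "unitary_mat n U" and BU: "B = U * real_diag n b * mat_adjoint U"
    using hermitian_spectral by blast
  have "real_diag n (\<lambda>j. sqrt (b j) * sqrt (b j)) = real_diag n b"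
    by (rule real_diag_cong) (use unitary_diag_psd_nonneg[OF U] B BU in auto)
  then have "(U * real_diag n (\<lambda>j. sqrt (b j)) * mat_adjoint U) * (U * real_diag n (\<lambda>j. sqrt (b j)) * mat_adjoint U) = B"
    unfolding unitary_diag_mult[OF U] BU by simp
  then show ?thesis using unitary_diag_carrier[OF U] unitary_diag_hermitian[OF U] by blast
qed

lemma eig_mult_mono_left:
  assumes le: "loewner_le n X Y" and B: "psd_mat n B" and i: "1 \<le> i" "i \<le> n"
  shows "eig (X * B) i \<le> eig (Y * B) i"
proof -
  obtain S where S: "S \<in> carrier_mat n n" "mat_adjoint S = S" and SS: "S * S = B"
    using psd_mat_sqrt[OF B] by blast
  have X: "X \<in> carrier_mat n n" and Y: "Y \<in> carrier_mat n n" using le unfolding loewner_le_def by auto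
  have "eig (S * X * S) i \<le> eig (S * Y * S) i"
    by (rule eig_mono[OF loewner_le_congruence[OF le S] i])
  then show ?thesis unfolding SS[symmetric] eig_mult_square[OF X S(1)] eig_mult_square[OF Y S(1)] .
qed

lemma diagonal_real_diag:
  assumes D: "D \<in> carrier_mat n n" and "diagonal_mat D" and "\<forall>i<n. D $$ (i,i) \<in> \<real>"
  shows "D = real_diag n (\<lambda>j. Re (D $$ (j,j)))"
  by (rule eq_matI) (use assms in \<open>auto simp: real_diag_def diagonal_mat_def\<close>)

lemma diag_min1_real_diag: "diag_min1 (real_diag n d) = real_diag n (\<lambda>j. min (d j) 1)"
  unfolding diag_min1_def real_diag_def by (rule eq_matI) auto

lemma mat_min1_spectral:
  assumes A: "psd_mat n A"
  shows "\<exists>U a. unitary_mat n U \<and> A = U * real_diag n a * mat_adjoint U \<and>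
    mat_min1 A = U * real_diag n (\<lambda>j. min (a j) 1) * mat_adjoint U \<and> (\<forall>j<n. 0 \<le> a j)"
proof -
  have Ac: "A \<in> carrier_mat n n" and hA: "mat_adjoint A = A"
    using A unfolding psd_mat_def hermitian_mat_def by auto
  then have dr: "dim_row A = n" by simp
  define P where "P = (\<lambda>M. \<exists>U D. unitary_mat (dim_row A) U \<and>
      D \<in> carrier_mat (dim_row A) (dim_row A) \<and> diagonal_mat D \<and>
      (\<forall>i < dim_row A. D $$ (i,i) \<in> \<real>) \<and>
      A = U * D * mat_adjoint U \<and> M = U * diag_min1 D * mat_adjoint U)"
  obtain U0 d0 where U0: "unitary_mat n U0" and A0: "A = U0 * real_diag n d0 * mat_adjoint U0"
    using hermitian_spectral[OF Ac hA] by blast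
  have "diagonal_mat (real_diag n d0)" "\<forall>i<n. real_diag n d0 $$ (i, i) \<in> \<real>"
    by (simp_all add: diagonal_mat_def real_diag_def)
  then have "P (U0 * diag_min1 (real_diag n d0) * mat_adjoint U0)"
    unfolding P_def dr using U0 A0 real_diag_carrier by blast
  then have "P (mat_min1 A)" unfolding mat_min1_def P_def[symmetric] by (rule someI)
  then obtain U D where U: "unitary_mat n U" and D: "D \<in> carrier_mat n n"
    and dD: "diagonal_mat D" and rD: "\<forall>i<n. D $$ (i,i) \<in> \<real>" and AD: "A = U * D * mat_adjoint U"
    and MD: "mat_min1 A = U * diag_min1 D * mat_adjoint U"
    unfolding P_def dr by blast
  define a where "a = (\<lambda>j. Re (D $$ (j,j)))"
  have Da: "D = real_diag n a" unfolding a_def by (rule diagonal_real_diag[OF D dD rD])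
  have "psd_mat n (U * real_diag n a * mat_adjoint U)" using A AD Da by simp
  then have "\<forall>j<n. 0 \<le> a j" using unitary_diag_psd_nonneg[OF U] by blast
  then show ?thesis using U AD MD unfolding Da diag_min1_real_diag by blast
qed

lemma psd_mat_min1:
  assumes "psd_mat n A"
  shows "psd_mat n (mat_min1 A)"
proof -
  obtain U a where U: "unitary_mat n U" and "mat_min1 A = U * real_diag n (\<lambda>j. min (a j) 1) * mat_adjoint U"
    and "\<forall>j<n. 0 \<le> a j"
    using mat_min1_spectral[OF assms] by blast
  then show ?thesis using psd_mat_unitary_diag[OF U] by simp
qed

lemma mat_min1_le:
  assumes "psd_mat n A"
  shows "loewner_le n (mat_min1 A) A"
proof -
  obtain U a where U: "unitary_mat n U" and "A = U * real_diag n a * mat_adjoint U"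
    and "mat_min1 A = U * real_diag n (\<lambda>j. min (a j) 1) * mat_adjoint U"
    using mat_min1_spectral[OF assms] by blast
  then show ?thesis using loewner_le_unitary_diag[OF U, of "\<lambda>j. min (a j) 1" a] by simp
qed

lemma mat_min1_le_one:
  assumes "psd_mat n A"
  shows "loewner_le n (mat_min1 A) (1\<^sub>m n)"
proof -
  obtain U a where U: "unitary_mat n U"
    and "mat_min1 A = U * real_diag n (\<lambda>j. min (a j) 1) * mat_adjoint U"
    using mat_min1_spectral[OF assms] by blast
  then show ?thesis
    using loewner_le_unitary_diag[OF U, of "\<lambda>j. min (a j) 1" "\<lambda>_. 1"] unitary_diag_one[OF U] by simp
qed

theorem lemma3:
  fixes n :: nat and A B :: "complex mat" and i :: nat
  assumes "psd_mat n A" and "psd_mat n B"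
    and "1 \<le> i" and "i \<le> n"
  shows "eig (mat_min1 A * mat_min1 B) i \<le> min (eig (A * B) i) 1"
proof -
  note i = assms(3,4)
  have A: "A \<in> carrier_mat n n" and B: "B \<in> carrier_mat n n" using assms unfolding psd_mat_def by auto
  have Bm: "mat_min1 B \<in> carrier_mat n n" using mat_min1_le[OF assms(2)] unfolding loewner_le_def by blast
  have "eig (mat_min1 A * mat_min1 B) i \<le> eig (A * mat_min1 B) i"
    by (rule eig_mult_mono_left[OF mat_min1_le[OF assms(1)] psd_mat_min1[OF assms(2)] i])
  also have "\<dots> = eig (mat_min1 B * A) i" by (rule eig_mult_comm[OF A Bm])
  also have "\<dots> \<le> eig (B * A) i" by (rule eig_mult_mono_left[OF mat_min1_le[OF assms(2)] assms(1) i])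
  also have "\<dots> = eig (A * B) i" by (rule eig_mult_comm[OF B A])
  finally have "eig (mat_min1 A * mat_min1 B) i \<le> eig (A * B) i" .
  moreover have "eig (mat_min1 A * mat_min1 B) i \<le> eig (1\<^sub>m n * mat_min1 B) i"
    by (rule eig_mult_mono_left[OF mat_min1_le_one[OF assms(1)] psd_mat_min1[OF assms(2)] i])
  moreover have "\<dots> \<le> 1"
    using eig_mono[OF mat_min1_le_one[OF assms(2)] i] eig_one[OF i] Bm by simp
  ultimately show ?thesis by simp
qed

end
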